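(* In the setting below, under the persistent excitation assumption and the inexact disturbance bound assumption, the fixed-complexity parameter set $\Theta_t$ with periodic update converges with probability 1 to a subset of $\{\theta\in\mathbb{R}^p: M_\Theta(\theta-\theta^\ast)\le(\rho N_u\tau/\beta)\mathbf{1}\}$; that is, with probability 1, $\bigcap_{t\ge0}\Theta_t\subseteq\{\theta: M_\Theta(\theta-\theta^\ast)\le(\rho N_u\tau/\beta)\mathbf{1}\}$.
   Context: Setting: $\theta^\ast\in\mathbb{R}^p$ is a fixed (unknown) parameter vector. $\mathcal{W}=\{w\in\mathbb{R}^{n_x}:\Pi_w w\le\pi_w\}$ is a compact convex polytope with $\pi_w>0$. The disturbances $w_0,w_1,\dots$ are independent random vectors in $\mathbb{R}^{n_x}$. $D_0,D_1,\dots\in\mathbb{R}^{n_x\times p}$ is a given (non-random) sequence of regressor matrices. For $t\ge1$ the (random) unfalsified parameter set is $\Delta_t=\{\theta\in\mathbb{R}^p: D_{t-1}(\theta^\ast-\theta)+w_{t-1}\in\mathcal{W}\}$. $\|\cdot\|$ is the Euclidean norm (induced 2-norm for matrices); $\mathcal{B}=\{x\in\mathbb{R}^{n_x}:\|x\|\le1\}$; $\oplus$ is Minkowski sum; $\mathbf{1}$ is the vector of ones; vector inequalities are componentwise. Persistent excitation assumption: there exist $\tau>0$, $\beta>0$ and an integer $N_u\ge\lceil p/n_x\rceil$ such that for every $t\ge0$, $\|D_t\|\le\tau$ and $\sum_{j=t}^{t+N_u-1}D_j^\top D_j\succeq\beta I$. Inexact disturbance bound assumption: there exist a compact set $\Omega\subset\mathbb{R}^{n_x}$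 and $\rho>0$ with $\Omega\subseteq\mathcal{W}\subseteq\Omega\oplus\rho\mathcal{B}$, such that $w_t\in\Omega$ for all $t$, and a function $p_w:(0,\infty)\to(0,1]$ such that for all $w^0\in\partial\Omega$ (boundary of $\Omega$), all $\epsilon>0$ and all $t\ge0$, $\Pr\{\|w_t-w^0\|<\epsilon\}\ge p_w(\epsilon)$. Fixed-complexity parameter set with periodic update: $M_\Theta\in\mathbb{R}^{r\times p}$ has rows of unit Euclidean norm and is such that $\Theta(\mu):=\{\theta:M_\Theta\theta\le\mu\}$ is bounded for every $\mu\in\mathbb{R}^r$; $\Theta_0=\Theta(\mu_0)$ contains $\theta^\ast$. For $t\ge1$: if $t=kN_u$ for some integer $k\ge1$, then $\Theta_t=\Theta(\mu_t)$ with $[\mu_t]_i=\max\{[M_\Theta]_i\theta:\theta\in\Theta_{t-N_u}\cap\bigcap_{j=t-N_u+1}^t\Delta_j\}$ for $i=1,\dots,r$; otherwise $\Theta_t=\Theta_{t-1}$. *)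

theory Defs
  imports "HOL-Analysis.Analysis" "HOL-Probability.Probability"
begin

text \<open>Vector inequalities on real^'n are componentwise (library order on vec).
  Vectors in R^n are real^'n; an n_x x p matrix is real^'p^'nx.\<close>

definition polytope_set :: "real^'nx^'m \<Rightarrow> real^'m \<Rightarrow> (real^'nx) set" where
  "polytope_set Pw pw = {x. Pw *v x \<le> pw}"

definition Theta_set :: "real^'p^'r \<Rightarrow> real^'r \<Rightarrow> (real^'p) set" where
  "Theta_set MT mu = {\<theta>. MT *v \<theta> \<le> mu}"

text \<open>Unfalsified set Delta_t for t \<ge> 1 (depends on the realisation w_{t-1}).\<close>
definition Delta_set ::
  "(real^'nx) set \<Rightarrow> (nat \<Rightarrow> real^'p^'nx) \<Rightarrow> real^'p \<Rightarrow> (nat \<Rightarrow> real^'nx) \<Rightarrow> nat \<Rightarrow> (real^'p) set" where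
  "Delta_set W D th w t = {\<theta>. D (t - 1) *v (th - \<theta>) + w (t - 1) \<in> W}"

text \<open>mu_k is the bound vector after the k-th periodic update (time k*Nu).\<close>
fun mu_seq ::
  "(real^'nx) set \<Rightarrow> (nat \<Rightarrow> real^'p^'nx) \<Rightarrow> real^'p \<Rightarrow> real^'p^'r \<Rightarrow> real^'r \<Rightarrow> nat
     \<Rightarrow> (nat \<Rightarrow> real^'nx) \<Rightarrow> nat \<Rightarrow> real^'r" where
  "mu_seq W D th MT mu0 Nu w 0 = mu0"
| "mu_seq W D th MT mu0 Nu w (Suc k) =
     (\<chi> i. Sup ((\<lambda>\<theta>. (MT $ i) \<bullet> \<theta>) `
        (Theta_set MT (mu_seq W D th MT mu0 Nu w k) \<inter>
         (\<Inter>j\<in>{k*Nu+1..(Suc k)*Nu}. Delta_set W D th w j))))"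

definition Theta_t ::
  "(real^'nx) set \<Rightarrow> (nat \<Rightarrow> real^'p^'nx) \<Rightarrow> real^'p \<Rightarrow> real^'p^'r \<Rightarrow> real^'r \<Rightarrow> nat
     \<Rightarrow> (nat \<Rightarrow> real^'nx) \<Rightarrow> nat \<Rightarrow> (real^'p) set" where
  "Theta_t W D th MT mu0 Nu w t = Theta_set MT (mu_seq W D th MT mu0 Nu w (t div Nu))"

end

theory Submission
  imports Defs
begin

text \<open>Fix a row m of M_Theta and a block of Nu consecutive steps. Persistent excitation makes
  the Gram matrix G = \<Sum> D_j^T D_j of the block invertible, with G u = -m for some u of norm at
  most 1/\<beta>; hence for every \<theta> in the set over which the update maximises,
  m\<bullet>(\<theta> - \<theta>*) = \<Sum> (D_j u)\<bullet>(D_j (\<theta>* - \<theta>)). Unfalsification puts D_j (\<theta>* - \<theta>) + w_j into W,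
  which lies within \<rho> of \<Omega>; so if each w_j is within \<epsilon> of a boundary point of \<Omega> maximising the
  functional D_j u over \<Omega>, each term is at most \<tau> (\<rho> + \<epsilon>) / \<beta>. Independence of the
  disturbances and the uniform bound p_w make such a block occur almost surely for every \<epsilon>;
  letting \<epsilon> \<rightarrow> 0 bounds every row.\<close>

lemma pos_def_solve_norm_le:
  fixes G :: "real^'n^'n" and m :: "real^'n"
  assumes pd: "\<And>x. \<beta> * (x \<bullet> x) \<le> x \<bullet> (G *v x)" and "\<beta> > 0"
  obtains u where "G *v u = m" "norm u \<le> norm m / \<beta>"
proof -
  have "inj ((*v) G)"
  proof (rule injI)
    fix x y assume "G *v x = G *v y"
    then have "G *v (x - y) = 0" by (simp add: matrix_vector_mult_diff_distrib)
    with pd[of "x - y"] \<open>\<beta> > 0\<close> have "(x - y) \<bullet> (x - y) \<le> 0"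
      by (simp add: mult_le_0_iff)
    then show "x = y" by (metis eq_iff_diff_eq_0 inner_gt_zero_iff not_le)
  qed
  then obtain u where u: "G *v u = m"
    by (metis full_rank_injective full_rank_surjective surjD)
  have "\<beta> * (norm u)\<^sup>2 \<le> u \<bullet> m" using pd[of u] u by (simp add: power2_norm_eq_inner)
  also have "\<dots> \<le> norm u * norm m" by (rule norm_cauchy_schwarz)
  finally have "\<beta> * norm u \<le> norm m"
    by (cases "norm u = 0") (auto simp: power2_eq_square mult_le_cancel_right mult_ac)
  with u \<open>\<beta> > 0\<close> show ?thesis by (intro that) (auto simp: field_simps)
qed

lemma block_gram_solution:
  fixes D :: "nat \<Rightarrow> real^'p^'nx"
  assumes "0 < Nu" "0 < \<beta>"
    and PE: "\<forall>t x. \<beta> * (x \<bullet> x) \<le> x \<bullet> ((\<Sum>j\<in>{t..t+Nu-1}. transpose (D j) ** D j) *v x)"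
  obtains u where "\<And>k m. (\<Sum>j\<in>{k*Nu..<k*Nu+Nu}. transpose (D j) ** D j) *v u k m = m"
    "\<And>k m. norm (u k m) \<le> norm m / \<beta>"
proof -
  have "\<exists>u. (\<Sum>j\<in>{k*Nu..<k*Nu+Nu}. transpose (D j) ** D j) *v u = m \<and> norm u \<le> norm m / \<beta>"
    for k m
  proof -
    have "{k*Nu..<k*Nu+Nu} = {k*Nu..k*Nu+Nu-1}" using \<open>0 < Nu\<close> by auto
    then have "\<beta> * (x \<bullet> x) \<le> x \<bullet> ((\<Sum>j\<in>{k*Nu..<k*Nu+Nu}. transpose (D j) ** D j) *v x)" for x
      using spec[OF spec[OF PE, of "k*Nu"], of x] by (simp only:)
    then obtain u where "(\<Sum>j\<in>{k*Nu..<k*Nu+Nu}. transpose (D j) ** D j) *v u = m"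
        "norm u \<le> norm m / \<beta>"
      by (rule pos_def_solve_norm_le[OF _ \<open>0 < \<beta>\<close>])
    then show ?thesis by blast
  qed
  then have "\<exists>u. \<forall>k m. (\<Sum>j\<in>{k*Nu..<k*Nu+Nu}. transpose (D j) ** D j) *v u k m = m \<and>
      norm (u k m) \<le> norm m / \<beta>"
    by - (rule choice, rule allI, rule choice, blast)
  then show ?thesis using that by blast
qed

lemma support_point_selector:
  fixes \<Omega> :: "'a::euclidean_space set"
  assumes "compact \<Omega>" "\<Omega> \<noteq> {}"
  obtains sp where "\<And>v. sp v \<in> frontier \<Omega>" "\<And>v y. y \<in> \<Omega> \<Longrightarrow> v \<bullet> y \<le> v \<bullet> sp v"
proof -
  have "\<exists>x\<in>frontier \<Omega>. \<forall>y\<in>\<Omega>. v \<bullet> y \<le> v \<bullet> x" for v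
  proof (cases "v = 0")
    case True
    have "\<Omega> \<noteq> UNIV" using compact_imp_bounded[OF \<open>compact \<Omega>\<close>] by auto
    then show ?thesis using frontier_not_empty[OF \<open>\<Omega> \<noteq> {}\<close>] True by auto
  next
    case False
    obtain x where x: "x \<in> \<Omega>" "\<And>y. y \<in> \<Omega> \<Longrightarrow> v \<bullet> y \<le> v \<bullet> x"
      using continuous_attains_sup[OF assms continuous_on_inner[OF continuous_on_const continuous_on_id]]
      by blast
    have "x \<notin> interior \<Omega>"
    proof
      assume "x \<in> interior \<Omega>"
      then obtain d where d: "d > 0" "ball x d \<subseteq> \<Omega>"
        by (meson open_contains_ball open_interior interior_subset subset_trans)
      define y where "y = x + (d / 2 / norm v) *\<^sub>R v"
      have "y \<in> \<Omega>" using d False by (auto simp: y_def dist_norm)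
      moreover have "v \<bullet> y = v \<bullet> x + d / 2 * norm v"
        using False by (simp add: y_def inner_add_right power2_norm_eq_inner[symmetric] power2_eq_square)
      ultimately show False using x(2)[of y] d False by (simp add: mult_le_0_iff)
    qed
    then have "x \<in> frontier \<Omega>"
      using x compact_imp_closed[OF \<open>compact \<Omega>\<close>] by (simp add: frontier_def)
    with x show ?thesis by blast
  qed
  then have "\<exists>sp. \<forall>v. sp v \<in> frontier \<Omega> \<and> (\<forall>y\<in>\<Omega>. v \<bullet> y \<le> v \<bullet> sp v)"
    by (intro choice) blast
  then show ?thesis using that by blast
qed

lemma inner_le_support_bound:
  fixes v x w c :: "'a::real_inner"
  assumes "x + w \<in> {a + b | a b. a \<in> \<Omega> \<and> norm b \<le> \<rho>}"
    and c: "\<And>y. y \<in> \<Omega> \<Longrightarrow> v \<bullet> y \<le> v \<bullet> c"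
    and "norm (w - c) \<le> \<epsilon>"
  shows "v \<bullet> x \<le> norm v * (\<rho> + \<epsilon>)"
proof -
  obtain a b where ab: "x = a + b - w" "a \<in> \<Omega>" "norm b \<le> \<rho>"
    using assms(1) by (force simp: algebra_simps)
  have "v \<bullet> x = v \<bullet> a + v \<bullet> b - v \<bullet> w" by (simp add: ab inner_add_right inner_diff_right)
  also have "\<dots> \<le> v \<bullet> (c - w) + norm v * \<rho>"
    using c[OF ab(2)] norm_cauchy_schwarz[of v b] mult_left_mono[OF ab(3) norm_ge_zero, of v]
    by (simp add: inner_diff_right)
  also have "\<dots> \<le> norm v * \<epsilon> + norm v * \<rho>"
    using norm_cauchy_schwarz[of v "c - w"] mult_left_mono[OF assms(3) norm_ge_zero, of v]
    by (simp add: norm_minus_commute)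
  finally show ?thesis by (simp add: algebra_simps)
qed

lemma mem_block_iff_div:
  fixes Nu :: nat
  assumes "0 < Nu"
  shows "t \<in> {k*Nu..<k*Nu+Nu} \<longleftrightarrow> t div Nu = k"
proof
  assume "t \<in> {k*Nu..<k*Nu+Nu}"
  then show "t div Nu = k" by (auto intro: div_nat_eqI simp: mult.commute)
next
  have "t div Nu * Nu \<le> t" "t < t div Nu * Nu + Nu"
    using div_mult_mod_eq[of t Nu] mod_less_divisor[OF assms, of t] by linarith+
  moreover assume "t div Nu = k"
  ultimately show "t \<in> {k*Nu..<k*Nu+Nu}" by simp
qed

context prob_space
begin

lemma prob_INT_indep_events_eq_0:
  fixes F :: "nat \<Rightarrow> 'a set"
  assumes indep: "indep_events F UNIV" and F: "\<And>k. prob (F k) \<le> a" and "a < 1"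
  shows "prob (\<Inter>k. F k) = 0"
proof -
  have ev: "F k \<in> events" for k using indep by (auto simp: indep_events_def)
  have "0 \<le> a" using F[of 0] measure_nonneg[of M "F 0"] by linarith
  have "prob (\<Inter>k. F k) \<le> a ^ Suc K" for K
  proof -
    have "prob (\<Inter>k. F k) \<le> prob (\<Inter>k\<in>{..K}. F k)"
      by (rule finite_measure_mono) (auto intro: ev)
    also have "\<dots> = (\<Prod>k\<in>{..K}. prob (F k))"
      using indep by (auto simp: indep_events_def)
    also have "\<dots> \<le> (\<Prod>k\<in>{..K}. a)"
      by (rule prod_mono) (use F in auto)
    finally show ?thesis by simp
  qed
  moreover have "(\<lambda>K. a ^ Suc K) \<longlonglongrightarrow> 0"
    using \<open>0 \<le> a\<close> \<open>a < 1\<close> by (intro LIMSEQ_Suc LIMSEQ_power_zero) simp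
  ultimately have "prob (\<Inter>k. F k) \<le> 0" by (intro LIMSEQ_le_const) auto
  then show ?thesis using measure_nonneg[of M] by (simp add: antisym)
qed

lemma AE_exists_block:
  fixes X :: "nat \<Rightarrow> 'a \<Rightarrow> 'b::topological_space"
  assumes indep: "indep_vars (\<lambda>_. borel) X UNIV" and "0 < Nu" and "0 < q"
    and A: "\<And>t. A t \<in> sets borel" and q: "\<And>t. q \<le> prob {x\<in>space M. X t x \<in> A t}"
  shows "AE x in M. \<exists>k. \<forall>t\<in>{k*Nu..<k*Nu+Nu}. X t x \<in> A t"
proof -
  define B where "B k = {k*Nu..<k*Nu+Nu}" for k
  define E where "E k = {x\<in>space M. \<forall>t\<in>B k. X t x \<in> A t}" for k
  have B: "finite (B k)" "B k \<noteq> {}" "card (B k) = Nu" for k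
    using \<open>0 < Nu\<close> by (auto simp: B_def)
  have X: "X t \<in> borel_measurable M" for t
    using indep by (auto simp: indep_vars_def)
  have E: "E k \<in> events" for k
  proof -
    have "Measurable.pred M (\<lambda>x. \<forall>t\<in>B k. X t x \<in> A t)"
      using B(1) A X by measurable
    then show ?thesis by (simp add: E_def pred_def)
  qed
  have prob_E: "q ^ Nu \<le> prob (E k)" for k
  proof -
    have "E k = (\<Inter>t\<in>B k. X t -` A t \<inter> space M)"
      using B(2) by (auto simp: E_def)
    then have "prob (E k) = (\<Prod>t\<in>B k. prob (X t -` A t \<inter> space M))"
      using indep_varsD[OF indep B(2,1)] A by simp
    also have "\<dots> \<ge> (\<Prod>t\<in>B k. q)"
    proof (rule prod_mono)
      fix t
      have "X t -` A t \<inter> space M = {x\<in>space M. X t x \<in> A t}" by blast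
      then show "0 \<le> q \<and> q \<le> prob (X t -` A t \<inter> space M)" using q[of t] \<open>0 < q\<close> by simp
    qed
    finally show ?thesis using B(3) by simp
  qed
  have "disjoint_family B"
    unfolding disjoint_family_on_def B_def
    by (metis (no_types, lifting) disjoint_iff mem_block_iff_div[OF \<open>0 < Nu\<close>])
  then have "indep_vars (\<lambda>k. PiM (B k) (\<lambda>_. borel)) (\<lambda>k x. restrict (\<lambda>t. X t x) (B k)) UNIV"
    by (rule indep_vars_restrict[OF indep subset_UNIV])
  then have "indep_events (\<lambda>k. {x\<in>space M. \<not> (\<forall>t\<in>B k. restrict (\<lambda>t. X t x) (B k) t \<in> A t)}) UNIV"
  proof (rule indep_eventsI_indep_vars)
    fix k
    have "Measurable.pred (PiM (B k) (\<lambda>_. borel)) (\<lambda>f. \<not> (\<forall>t\<in>B k. f t \<in> A t))"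
      using B(1) A by measurable
    then show "{f\<in>space (PiM (B k) (\<lambda>_. borel)). \<not> (\<forall>t\<in>B k. f t \<in> A t)} \<in> sets (PiM (B k) (\<lambda>_. borel))"
      by (simp add: pred_def)
  qed
  moreover have "(\<lambda>k. {x\<in>space M. \<not> (\<forall>t\<in>B k. restrict (\<lambda>t. X t x) (B k) t \<in> A t)}) = (\<lambda>k. space M - E k)"
    by (auto simp: E_def)
  ultimately have "indep_events (\<lambda>k. space M - E k) UNIV" by simp
  moreover have "prob (space M - E k) \<le> 1 - q ^ Nu" for k
    using prob_E[of k] prob_compl[OF E] by simp
  moreover have "1 - q ^ Nu < 1" using \<open>0 < q\<close> by simp
  ultimately have "prob (\<Inter>k. space M - E k) = 0"
    by (rule prob_INT_indep_events_eq_0)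
  then have "(\<Inter>k. space M - E k) \<in> null_sets M"
    using E by (auto simp: null_sets_def emeasure_eq_measure)
  then show ?thesis by (rule AE_I') (auto simp: E_def B_def)
qed


lemma AE_all_pos_exists_block:
  fixes X :: "nat \<Rightarrow> 'a \<Rightarrow> 'b::metric_space" and c :: "nat \<Rightarrow> 'b"
  assumes indep: "indep_vars (\<lambda>_. borel) X UNIV" and "0 < Nu"
    and q_pos: "\<And>\<epsilon>. 0 < \<epsilon> \<Longrightarrow> 0 < q \<epsilon>"
    and q: "\<And>\<epsilon> t. 0 < \<epsilon> \<Longrightarrow> q \<epsilon> \<le> prob {x\<in>space M. dist (X t x) (c t) < \<epsilon>}"
  shows "AE x in M. \<forall>\<epsilon>>0. \<exists>k. \<forall>t\<in>{k*Nu..<k*Nu+Nu}. dist (X t x) (c t) < \<epsilon>"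
proof -
  have "AE x in M. \<exists>k. \<forall>t\<in>{k*Nu..<k*Nu+Nu}. X t x \<in> ball (c t) (1 / Suc n)" for n
    using q_pos[of "1 / Suc n"] q[of "1 / Suc n"]
    by (intro AE_exists_block[OF indep \<open>0 < Nu\<close>, of "q (1 / Suc n)"]) (auto simp: mem_ball dist_commute)
  then have "AE x in M. \<forall>n. \<exists>k. \<forall>t\<in>{k*Nu..<k*Nu+Nu}. X t x \<in> ball (c t) (1 / Suc n)"
    by (simp add: AE_all_countable)
  then show ?thesis
  proof eventually_elim
    case (elim x)
    show ?case
    proof (intro allI impI)
      fix \<epsilon> :: real assume "0 < \<epsilon>"
      then obtain n where n: "1 / real (Suc n) < \<epsilon>" by (rule nat_approx_posE)
      obtain k where "\<forall>t\<in>{k*Nu..<k*Nu+Nu}. X t x \<in> ball (c t) (1 / Suc n)"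
        using elim by blast
      with n show "\<exists>k. \<forall>t\<in>{k*Nu..<k*Nu+Nu}. dist (X t x) (c t) < \<epsilon>"
        by (intro exI[of _ k]) (auto simp: mem_ball dist_commute)
    qed
  qed
qed
end

definition update_set ::
  "(real^'nx) set \<Rightarrow> (nat \<Rightarrow> real^'p^'nx) \<Rightarrow> real^'p \<Rightarrow> real^'p^'r \<Rightarrow> real^'r \<Rightarrow> nat
     \<Rightarrow> (nat \<Rightarrow> real^'nx) \<Rightarrow> nat \<Rightarrow> (real^'p) set" where
  "update_set W D th MT mu0 Nu w k = Theta_set MT (mu_seq W D th MT mu0 Nu w k) \<inter>
     (\<Inter>j\<in>{k*Nu+1..Suc k*Nu}. Delta_set W D th w j)"

lemma mu_seq_Suc_component:
  "mu_seq W D th MT mu0 Nu w (Suc k) $ i = Sup ((\<lambda>\<theta>. MT $ i \<bullet> \<theta>) ` update_set W D th MT mu0 Nu w k)"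
  by (simp add: update_set_def)

lemma matrix_vector_mult_component: "(A *v x) $ i = A $ i \<bullet> (x::real^'n)"
  by (simp add: matrix_vector_mult_def inner_vec_def mult.commute)

lemma mem_Theta_set_iff: "\<theta> \<in> Theta_set MT mu \<longleftrightarrow> (\<forall>i. MT $ i \<bullet> \<theta> \<le> mu $ i)"
  by (simp add: Theta_set_def less_eq_vec_def matrix_vector_mult_component)

lemma true_param_in_update_set:
  assumes "\<And>t. w t \<in> W" "th \<in> Theta_set MT (mu_seq W D th MT mu0 Nu w k)"
  shows "th \<in> update_set W D th MT mu0 Nu w k"
  using assms by (simp add: update_set_def Delta_set_def)

lemma true_param_in_Theta_mu_seq:
  assumes bounded: "\<And>mu. bounded (Theta_set MT mu)" and w: "\<And>t. w t \<in> W"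
    and "th \<in> Theta_set MT mu0"
  shows "th \<in> Theta_set MT (mu_seq W D th MT mu0 Nu w k)"
proof (induction k)
  case 0
  then show ?case using \<open>th \<in> Theta_set MT mu0\<close> by simp
next
  case (Suc k)
  define S where "S = update_set W D th MT mu0 Nu w k"
  have "th \<in> S" using true_param_in_update_set[OF w Suc] by (simp add: S_def)
  have "MT $ i \<bullet> th \<le> Sup ((\<lambda>\<theta>. MT $ i \<bullet> \<theta>) ` S)" for i
  proof (rule cSup_upper)
    have "bounded ((\<lambda>\<theta>. MT $ i \<bullet> \<theta>) ` S)"
      by (rule bounded_linear_image[OF bounded_subset[OF bounded]])
         (auto simp: S_def update_set_def bounded_linear_inner_right)
    then show "bdd_above ((\<lambda>\<theta>. MT $ i \<bullet> \<theta>) ` S)" by (rule bounded_imp_bdd_above)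
  qed (use \<open>th \<in> S\<close> in auto)
  then show ?case unfolding mem_Theta_set_iff mu_seq_Suc_component S_def by blast
qed

lemma matrix_vector_mult_sum_left: "sum A S *v (x::real^'n) = (\<Sum>j\<in>S. A j *v x)"
  by (induction S rule: infinite_finite_induct) (auto simp: matrix_vector_mult_add_rdistrib)

lemma inner_gram_matrix: "((transpose D ** D) *v u) \<bullet> e = (D *v u) \<bullet> (D *v (e::real^'n))"
  by (simp add: matrix_vector_mul_assoc[symmetric] dot_lmul_matrix)

lemma mu_seq_Suc_component_le:
  fixes D :: "nat \<Rightarrow> real^'p^'nx" and u :: "real^'p"
  assumes w: "\<And>t. w t \<in> W" and W: "W \<subseteq> {a + b | a b. a \<in> \<Omega> \<and> norm b \<le> \<rho>}"
    and th: "th \<in> Theta_set MT (mu_seq W D th MT mu0 Nu w k)"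
    and D: "\<And>t x. norm (D t *v x) \<le> \<tau> * norm x"
    and u: "(\<Sum>j\<in>{k*Nu..<k*Nu+Nu}. transpose (D j) ** D j) *v u = - MT $ i"
    and c: "\<And>t y. t \<in> {k*Nu..<k*Nu+Nu} \<Longrightarrow> y \<in> \<Omega> \<Longrightarrow> (D t *v u) \<bullet> y \<le> (D t *v u) \<bullet> c t"
    and close: "\<And>t. t \<in> {k*Nu..<k*Nu+Nu} \<Longrightarrow> norm (w t - c t) \<le> \<epsilon>"
    and "0 \<le> \<rho>" "0 \<le> \<epsilon>"
  shows "mu_seq W D th MT mu0 Nu w (Suc k) $ i \<le> MT $ i \<bullet> th + Nu * (\<tau> * norm u * (\<rho> + \<epsilon>))"
proof -
  have "MT $ i \<bullet> \<theta> \<le> MT $ i \<bullet> th + Nu * (\<tau> * norm u * (\<rho> + \<epsilon>))"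
    if \<theta>: "\<theta> \<in> update_set W D th MT mu0 Nu w k" for \<theta>
  proof -
    have term_le: "(D t *v u) \<bullet> (D t *v (th - \<theta>)) \<le> \<tau> * norm u * (\<rho> + \<epsilon>)"
      if t: "t \<in> {k*Nu..<k*Nu+Nu}" for t
    proof -
      have "Suc t \<in> {k*Nu+1..Suc k*Nu}" using t by simp
      then have "\<theta> \<in> Delta_set W D th w (Suc t)"
        using \<theta> unfolding update_set_def by blast
      then have "D t *v (th - \<theta>) + w t \<in> {a + b | a b. a \<in> \<Omega> \<and> norm b \<le> \<rho>}"
        using W by (auto simp: Delta_set_def)
      then have "(D t *v u) \<bullet> (D t *v (th - \<theta>)) \<le> norm (D t *v u) * (\<rho> + \<epsilon>)"
        by (rule inner_le_support_bound[OF _ c[OF t] close[OF t]])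
      also have "\<dots> \<le> \<tau> * norm u * (\<rho> + \<epsilon>)"
        using D[of t u] \<open>0 \<le> \<rho>\<close> \<open>0 \<le> \<epsilon>\<close> by (intro mult_right_mono) auto
      finally show ?thesis .
    qed
    have "MT $ i \<bullet> \<theta> - MT $ i \<bullet> th = ((\<Sum>j\<in>{k*Nu..<k*Nu+Nu}. transpose (D j) ** D j) *v u) \<bullet> (th - \<theta>)"
      by (simp add: u inner_diff_right)
    also have "\<dots> = (\<Sum>j\<in>{k*Nu..<k*Nu+Nu}. (D j *v u) \<bullet> (D j *v (th - \<theta>)))"
      by (simp add: matrix_vector_mult_sum_left inner_sum_left inner_gram_matrix)
    also have "\<dots> \<le> (\<Sum>j\<in>{k*Nu..<k*Nu+Nu}. \<tau> * norm u * (\<rho> + \<epsilon>))"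
      by (rule sum_mono) (rule term_le)
    finally show ?thesis by simp
  qed
  then show ?thesis
    unfolding mu_seq_Suc_component
    using true_param_in_update_set[OF w th] by (intro cSup_least) auto
qed

lemma Inter_Theta_t_row_le:
  fixes D :: "nat \<Rightarrow> real^'p^'nx" and u :: "nat \<Rightarrow> real^'p"
  assumes "0 < Nu" "0 < \<beta>" "0 \<le> \<rho>" "0 \<le> \<tau>"
    and w: "\<And>t. w t \<in> W" and W: "W \<subseteq> {a + b | a b. a \<in> \<Omega> \<and> norm b \<le> \<rho>}"
    and bounded: "\<And>mu. bounded (Theta_set MT mu)" and th: "th \<in> Theta_set MT mu0"
    and D: "\<And>t x. norm (D t *v x) \<le> \<tau> * norm x"
    and u: "\<And>k. (\<Sum>j\<in>{k*Nu..<k*Nu+Nu}. transpose (D j) ** D j) *v u k = - MT $ i"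
    and u_le: "\<And>k. norm (u k) \<le> 1 / \<beta>"
    and c: "\<And>t y. y \<in> \<Omega> \<Longrightarrow> (D t *v u (t div Nu)) \<bullet> y \<le> (D t *v u (t div Nu)) \<bullet> c t"
    and close: "\<And>\<epsilon>. 0 < \<epsilon> \<Longrightarrow> \<exists>k. \<forall>t\<in>{k*Nu..<k*Nu+Nu}. dist (w t) (c t) < \<epsilon>"
    and \<theta>: "\<theta> \<in> (\<Inter>t. Theta_t W D th MT mu0 Nu w t)"
  shows "MT $ i \<bullet> (\<theta> - th) \<le> \<rho> * real Nu * \<tau> / \<beta>"
proof -
  define C where "C = real Nu * \<tau> / \<beta>"
  have bound: "MT $ i \<bullet> (\<theta> - th) \<le> \<rho> * C + C * \<epsilon>" if "0 < \<epsilon>" for \<epsilon>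
  proof -
    obtain k where "\<forall>t\<in>{k*Nu..<k*Nu+Nu}. dist (w t) (c t) < \<epsilon>"
      using close[OF \<open>0 < \<epsilon>\<close>] by blast
    then have k: "\<And>t. t \<in> {k*Nu..<k*Nu+Nu} \<Longrightarrow> norm (w t - c t) \<le> \<epsilon>"
      using less_imp_le by (fastforce simp: dist_norm)
    have ck: "(D t *v u k) \<bullet> y \<le> (D t *v u k) \<bullet> c t"
      if "t \<in> {k*Nu..<k*Nu+Nu}" "y \<in> \<Omega>" for t y
      using c[OF \<open>y \<in> \<Omega>\<close>, of t] mem_block_iff_div[OF \<open>0 < Nu\<close>] that(1) by simp
    have "\<theta> \<in> Theta_set MT (mu_seq W D th MT mu0 Nu w (Suc k))"
      using \<theta> \<open>0 < Nu\<close> by (auto simp: Theta_t_def dest: spec[of _ "Suc k * Nu"])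
    then have "MT $ i \<bullet> \<theta> \<le> mu_seq W D th MT mu0 Nu w (Suc k) $ i"
      by (simp add: mem_Theta_set_iff)
    also have "\<dots> \<le> MT $ i \<bullet> th + Nu * (\<tau> * norm (u k) * (\<rho> + \<epsilon>))"
      using ck k \<open>0 \<le> \<rho>\<close> less_imp_le[OF \<open>0 < \<epsilon>\<close>]
      by (intro mu_seq_Suc_component_le[OF w W true_param_in_Theta_mu_seq[OF bounded w th] D u])
    also have "\<dots> \<le> MT $ i \<bullet> th + Nu * (\<tau> * (1 / \<beta>) * (\<rho> + \<epsilon>))"
      using u_le \<open>0 \<le> \<rho>\<close> \<open>0 \<le> \<tau>\<close> \<open>0 < \<epsilon>\<close>
      by (intro add_left_mono mult_left_mono mult_right_mono) auto
    finally show ?thesis using \<open>0 < \<beta>\<close> by (simp add: C_def inner_diff_right field_simps)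
  qed
  have "((\<lambda>\<epsilon>. \<rho> * C + C * \<epsilon>) \<longlongrightarrow> \<rho> * C) (at_right 0)"
    by (auto intro!: tendsto_eq_intros)
  moreover have "\<forall>\<^sub>F \<epsilon> in at_right 0. MT $ i \<bullet> (\<theta> - th) \<le> \<rho> * C + C * \<epsilon>"
    using eventually_at_right_less by (rule eventually_mono) (rule bound)
  ultimately have "MT $ i \<bullet> (\<theta> - th) \<le> \<rho> * C"
    by (rule tendsto_lowerbound) (rule trivial_limit_at_right_real)
  then show ?thesis by (simp add: C_def)
qed

theorem corollary5:
  fixes M :: "'s measure"
    and th :: "real^'p"
    and Pi_w :: "real^'nx^'m" and pi_w :: "real^'m"
    and w :: "nat \<Rightarrow> 's \<Rightarrow> real^'nx"
    and D :: "nat \<Rightarrow> real^'p^'nx"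
    and \<tau> \<beta> \<rho> :: real and Nu :: nat
    and \<Omega> :: "(real^'nx) set"
    and p_w :: "real \<Rightarrow> real"
    and MT :: "real^'p^'r" and mu0 :: "real^'r"
  assumes prob: "prob_space M"
    and W_compact: "compact (polytope_set Pi_w pi_w)"
    and pi_pos: "\<forall>i. pi_w $ i > 0"
    and indep: "prob_space.indep_vars M (\<lambda>_. borel) w UNIV"
    and tau_pos: "\<tau> > 0" and beta_pos: "\<beta> > 0"
    and Nu_ge: "real Nu \<ge> of_int \<lceil>real CARD('p) / real CARD('nx)\<rceil>"
    and D_bound: "\<forall>t. onorm (\<lambda>x. D t *v x) \<le> \<tau>"
    and PE: "\<forall>t. \<forall>x::real^'p.
               x \<bullet> ((\<Sum>j\<in>{t..t+Nu-1}. transpose (D j) ** D j) *v x) \<ge> \<beta> * (x \<bullet> x)"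
    and Omega_compact: "compact \<Omega>"
    and rho_pos: "\<rho> > 0"
    and Omega_sub: "\<Omega> \<subseteq> polytope_set Pi_w pi_w"
    and W_sub: "polytope_set Pi_w pi_w \<subseteq> {a + b | a b. a \<in> \<Omega> \<and> norm b \<le> \<rho>}"
    and w_in: "\<forall>t. \<forall>s\<in>space M. w t s \<in> \<Omega>"
    and pw_range: "\<forall>\<epsilon>>0. 0 < p_w \<epsilon> \<and> p_w \<epsilon> \<le> 1"
    and pw_bound: "\<forall>w0\<in>frontier \<Omega>. \<forall>\<epsilon>>0. \<forall>t.
               measure M {s\<in>space M. norm (w t s - w0) < \<epsilon>} \<ge> p_w \<epsilon>"
    and MT_rows: "\<forall>i. norm (MT $ i) = 1"
    and MT_bounded: "\<forall>mu. bounded (Theta_set MT mu)"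
    and th_in: "th \<in> Theta_set MT mu0"
  shows "AE s in M. (\<Inter>t. Theta_t (polytope_set Pi_w pi_w) D th MT mu0 Nu (\<lambda>k. w k s) t)
           \<subseteq> {\<theta>. MT *v (\<theta> - th) \<le> (\<chi> i. \<rho> * real Nu * \<tau> / \<beta>)}"
proof -
  interpret prob_space M by (rule prob)
  have "0 < real CARD('p) / real CARD('nx)" by simp
  then have "0 < real Nu"
    using Nu_ge le_of_int_ceiling[of "real CARD('p) / real CARD('nx)"] by linarith
  then have "0 < Nu" by simp
  have D: "norm (D t *v x) \<le> \<tau> * norm x" for t x
    using onorm[OF matrix_vector_mul_bounded_linear, of "D t" x] D_bound
    by (meson mult_right_mono norm_ge_zero order_trans)
  obtain U where U: "\<And>k m. (\<Sum>j\<in>{k*Nu..<k*Nu+Nu}. transpose (D j) ** D j) *v U k m = m"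
      "\<And>k m. norm (U k m) \<le> norm m / \<beta>"
    using block_gram_solution[OF \<open>0 < Nu\<close> beta_pos] PE by blast
  have U_le: "norm (U k (- MT $ i)) \<le> 1 / \<beta>" for k i
    using U(2)[of k "- MT $ i"] MT_rows by simp
  have "\<Omega> \<noteq> {}" using w_in not_empty by blast
  then obtain sp where sp: "\<And>v. sp v \<in> frontier \<Omega>" "\<And>v y. y \<in> \<Omega> \<Longrightarrow> v \<bullet> y \<le> v \<bullet> sp v"
    using support_point_selector[OF Omega_compact] by blast
  define c where "c i t = sp (D t *v U (t div Nu) (- MT $ i))" for i t
  have "AE s in M. \<forall>i\<in>UNIV. \<forall>\<epsilon>>0. \<exists>k. \<forall>t\<in>{k*Nu..<k*Nu+Nu}. dist (w t s) (c i t) < \<epsilon>"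
    using pw_range pw_bound sp(1)
    by (intro AE_finite_allI AE_all_pos_exists_block[OF indep \<open>0 < Nu\<close>, of p_w])
       (auto simp: c_def dist_norm)
  with AE_space show ?thesis
  proof eventually_elim
    case (elim s)
    have "MT $ i \<bullet> (\<theta> - th) \<le> \<rho> * real Nu * \<tau> / \<beta>"
      if "\<theta> \<in> (\<Inter>t. Theta_t (polytope_set Pi_w pi_w) D th MT mu0 Nu (\<lambda>k. w k s) t)" for i \<theta>
      by (rule Inter_Theta_t_row_le[where u = "\<lambda>k. U k (- MT $ i)" and c = "c i",
            OF \<open>0 < Nu\<close> beta_pos less_imp_le[OF rho_pos] less_imp_le[OF tau_pos] _ W_sub
            MT_bounded[rule_format] th_in D U(1) _ _ _ that])
         (use U_le sp(2) elim w_in Omega_sub in \<open>auto simp: c_def\<close>)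
    then show ?case by (auto simp: less_eq_vec_def matrix_vector_mult_component)
  qed
qed

end
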